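(* Let $n$ be a positive integer and let $L$ and $R$ be the matrices indexed by $P(n)$ defined in the context. Let $x=(x_{(d,c)})_{(d,c)\in P(n)}$ be a column vector such that $x_{(d,c)}=x_{(1,c)}$ for all $(d,c)\in P(n)$. Then $Lx=Rx$.
   Context: Let $\phi$ denote Euler's totient function. For a positive integer $n$ let $P(n)=\{(i,j): j\mid n,\ i\mid j\}$. Define square matrices $L$ and $R$ with rows and columns indexed by $P(n)$ as follows. For a row index $(i,j)$ and a column index $(d,c)$: $L_{(i,j)}^{(d,c)} = \phi(d)\,\frac{n}{\operatorname{lcm}(j,c)}$ if $d\mid i$ and $j\mid \operatorname{lcm}(i,c)$, and $L_{(i,j)}^{(d,c)}=0$ otherwise. For the row $(i,j)$, let $v$ be the largest divisor of $i$ coprime with $j/i$ and put $u=i/v$. Then $R_{(i,j)}^{(e,c)} = u\,\phi(ev/j)\,\frac{n}{\operatorname{lcm}(j,c)}$ if $(j/v)\mid e$, $e\mid j$ and $j\mid\operatorname{lcm}(i,c)$, and $R_{(i,j)}^{(e,c)}=0$ otherwise. (Equivalently, with variables $N_d^c$, $(d,c)\in P(n)$, row $(i,j)$ of $L$ gives the coefficients of $\sum_{d\mid i}\phi(d)\sum_{c\mid n,\ d\mid c,\ j\mid\operatorname{lcm}(i,c)}\frac{n}{\operatorname{lcm}(j,c)}N_d^c$, and row $(i,j)$ of $R$ gives the coefficients of $\sum_{d\mid v}u\phi(d)\sum_{c\mid n,\ d\mid c,\ j\mid \operatorname{lcm}(i,c)}\frac{n}{\operatorname{lcm}(j,c)}N_{jd/v}^c$.)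 *)

theory Defs
  imports "HOL-Number_Theory.Number_Theory"
begin

definition Pset :: "nat \<Rightarrow> (nat \<times> nat) set" where
  "Pset n = {(i, j). j dvd n \<and> i dvd j}"

definition Lmat :: "nat \<Rightarrow> nat \<times> nat \<Rightarrow> nat \<times> nat \<Rightarrow> nat" where
  "Lmat n = (\<lambda>(i, j) (d, c).
     if d dvd i \<and> j dvd lcm i c then totient d * (n div lcm j c) else 0)"

definition vpart :: "nat \<Rightarrow> nat \<Rightarrow> nat" where
  "vpart i j = Max {v. v dvd i \<and> coprime v (j div i)}"

definition upart :: "nat \<Rightarrow> nat \<Rightarrow> nat" where
  "upart i j = i div vpart i j"

text \<open>Matrix R: row (i,j), column (e,c). Here e*v/j is an exact quotient since (j/v) | e.\<close>
definition Rmat :: "nat \<Rightarrow> nat \<times> nat \<Rightarrow> nat \<times> nat \<Rightarrow> nat" where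
  "Rmat n = (\<lambda>(i, j) (e, c).
     (let v = vpart i j; u = upart i j in
      if (j div v) dvd e \<and> e dvd j \<and> j dvd lcm i c
      then u * totient (e * v div j) * (n div lcm j c) else 0))"

definition matvec :: "nat \<Rightarrow> (nat \<times> nat \<Rightarrow> nat \<times> nat \<Rightarrow> nat)
    \<Rightarrow> (nat \<times> nat \<Rightarrow> 'a::comm_ring_1) \<Rightarrow> nat \<times> nat \<Rightarrow> 'a" where
  "matvec n M x = (\<lambda>r. \<Sum>k\<in>Pset n. of_nat (M r k) * x k)"

end

theory Submission
  imports Defs
begin

text \<open>
  If x is constant on each block {(d, c) : d | c}, then row (i, j) of L x and of R x only involves
  the block sums of that row. By Gauss's identity (sum of totient d over d | m equals m) the L-block
  sum is gcd(i, c) N and the R-block sum is u gcd(v, c/w) N, where N = n / lcm(j, c) and w = j/v,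
  provided w | c. This divisibility follows from j | lcm(i, c): every prime factor of u divides j/i,
  so u cannot supply any part of j/i inside lcm(u, c), which therefore must come from c. Finally
  gcd(i, c) = u gcd(v, c/w) because v is coprime to j/i.
\<close>

lemma Max_coprime_divisor:
  fixes i k :: nat
  assumes "i > 0"
  defines "v \<equiv> Max {v. v dvd i \<and> coprime v k}"
  shows "v dvd i" and "coprime v k"
    and "\<And>p. prime p \<Longrightarrow> p dvd i div v \<Longrightarrow> p dvd k"
proof -
  let ?S = "{v. v dvd i \<and> coprime v k}"
  have "?S \<subseteq> {d. d dvd i}" by blast
  then have fin: "finite ?S"
    using finite_divisors_nat[OF assms(1)] by (rule finite_subset)
  have "1 \<in> ?S" by simp
  then have "v \<in> ?S"
    unfolding v_def using fin by (intro Max_in) auto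
  then show v: "v dvd i" "coprime v k" by auto
  have "v > 0" using v(1) assms(1) by (auto intro: gr0I)
  fix p :: nat assume p: "prime p" "p dvd i div v"
  show "p dvd k"
  proof (rule ccontr)
    assume "\<not> p dvd k"
    then have "coprime (p * v) k"
      using v(2) p(1) prime_imp_coprime by simp
    moreover have "p * v dvd i"
      using p(2) v(1) \<open>v > 0\<close> by (simp add: dvd_div_iff_mult)
    ultimately have "p * v \<le> v"
      unfolding v_def using fin by (intro Max_ge) auto
    then show False
      using \<open>v > 0\<close> prime_gt_1_nat[OF p(1)] by simp
  qed
qed

lemma vpart_dvd: "i > 0 \<Longrightarrow> vpart i j dvd i"
  unfolding vpart_def by (rule Max_coprime_divisor(1))

lemma coprime_vpart: "i > 0 \<Longrightarrow> coprime (vpart i j) (j div i)"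
  unfolding vpart_def by (rule Max_coprime_divisor(2))

lemma prime_dvd_upart_imp_dvd:
  "i > 0 \<Longrightarrow> prime p \<Longrightarrow> p dvd upart i j \<Longrightarrow> p dvd j div i"
  unfolding upart_def vpart_def by (rule Max_coprime_divisor(3))

lemma upart_mult_vpart: "i > 0 \<Longrightarrow> upart i j * vpart i j = i"
  unfolding upart_def by (simp add: vpart_dvd)

lemma mult_dvd_of_dvd_lcm:
  fixes u k c :: nat
  assumes "u > 0" and "u * k dvd lcm u c"
    and "\<And>p. prime p \<Longrightarrow> p dvd u \<Longrightarrow> p dvd k"
  shows "u * k dvd c"
proof -
  define g where "g = gcd u c"
  have "g > 0" unfolding g_def using assms(1) by simp
  then obtain u' c' where u': "u = u' * g" and c': "c = c' * g" and "coprime u' c'"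
    using gcd_coprime_exists[of u c] unfolding g_def by blast
  have "lcm u c = u' * c' * g"
    using lcm_mult_right[of u' g c'] lcm_coprime[OF \<open>coprime u' c'\<close>] u' c' by (simp add: lcm.commute)
  with assms u' \<open>g > 0\<close> have "k dvd c'"
    by (simp add: mult.commute mult.left_commute)
  have "u' = 1"
  proof (rule ccontr)
    assume "u' \<noteq> 1"
    then obtain p :: nat where p: "prime p" "p dvd u'" using prime_factor_nat by blast
    then have "p dvd c'"
      using assms(3) u' \<open>k dvd c'\<close> by (meson dvd_mult2 dvd_trans)
    with p \<open>coprime u' c'\<close> show False
      by (meson coprime_common_divisor not_prime_unit)
  qed
  then show ?thesis using u' c' \<open>k dvd c'\<close> by (simp add: mult.commute)
qed

lemma sum_Lmat_block:
  assumes "c > 0" and "j dvd lcm i c"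
  shows "(\<Sum>d | d dvd c. Lmat n (i, j) (d, c)) = gcd i c * (n div lcm j c)"
proof -
  have "(\<Sum>d | d dvd c. Lmat n (i, j) (d, c)) = (\<Sum>d | d dvd gcd i c. totient d * (n div lcm j c))"
    using assms by (intro sum.mono_neutral_cong_right) (auto simp: Lmat_def)
  also have "\<dots> = gcd i c * (n div lcm j c)"
    by (simp only: sum_distrib_right[symmetric] totient_divisor_sum)
  finally show ?thesis .
qed

lemma sum_Rmat_block:
  assumes "j > 0" and "c > 0" and "j dvd lcm i c"
    and w: "vpart i j * w = j" and "w dvd c"
  shows "(\<Sum>e | e dvd c. Rmat n (i, j) (e, c)) = upart i j * gcd (vpart i j) (c div w) * (n div lcm j c)"
proof -
  define v where "v = vpart i j"
  have j: "j = w * v" using w unfolding v_def by (simp add: mult.commute)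
  have "0 < w * v" using j \<open>j > 0\<close> by simp
  then have "w > 0" "v > 0" by simp_all
  have j_div_v: "j div v = w" using j \<open>v > 0\<close> by simp
  have support: "{e. e dvd c \<and> w dvd e \<and> e dvd j} = (\<lambda>f. w * f) ` {f. f dvd gcd v (c div w)}"
  proof (intro equalityI subsetI)
    fix e assume "e \<in> {e. e dvd c \<and> w dvd e \<and> e dvd j}"
    then have e: "e dvd c" "w dvd e" "e dvd j" by simp_all
    from e(2) obtain f where f: "e = w * f" by (rule dvdE)
    have "f dvd v" using e(3) \<open>w > 0\<close> unfolding f j by simp
    moreover have "f dvd c div w"
      using e(1) \<open>w > 0\<close> \<open>w dvd c\<close> unfolding f by (simp add: dvd_div_iff_mult mult.commute)
    ultimately have "f \<in> {f. f dvd gcd v (c div w)}" by simp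
    then show "e \<in> (\<lambda>f. w * f) ` {f. f dvd gcd v (c div w)}" unfolding f by (rule imageI)
  next
    fix e assume "e \<in> (\<lambda>f. w * f) ` {f. f dvd gcd v (c div w)}"
    then obtain f where f: "e = w * f" and "f dvd v" and "f dvd c div w" by auto
    then have "w * f dvd c"
      using \<open>w > 0\<close> \<open>w dvd c\<close> by (simp add: dvd_div_iff_mult mult.commute)
    moreover have "w * f dvd w * v" using \<open>f dvd v\<close> by simp
    ultimately show "e \<in> {e. e dvd c \<and> w dvd e \<and> e dvd j}" unfolding f j by simp
  qed
  have "(\<Sum>e | e dvd c. Rmat n (i, j) (e, c))
      = (\<Sum>e | e dvd c \<and> w dvd e \<and> e dvd j. upart i j * totient (e * v div j) * (n div lcm j c))"
    using \<open>c > 0\<close> \<open>j dvd lcm i c\<close>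
    by (intro sum.mono_neutral_cong_right) (auto simp: Rmat_def Let_def v_def[symmetric] j_div_v)
  also have "\<dots> = (\<Sum>f | f dvd gcd v (c div w). upart i j * totient (w * f * v div j) * (n div lcm j c))"
    unfolding support using \<open>w > 0\<close> by (subst sum.reindex) (auto simp: inj_on_def)
  also have "\<dots> = (\<Sum>f | f dvd gcd v (c div w). upart i j * totient f * (n div lcm j c))"
    using w \<open>v > 0\<close> \<open>w > 0\<close> unfolding v_def by (intro sum.cong) (auto simp: mult.commute mult.left_commute)
  also have "\<dots> = upart i j * (\<Sum>f | f dvd gcd v (c div w). totient f) * (n div lcm j c)"
    by (simp add: sum_distrib_left sum_distrib_right mult.assoc)
  also have "\<dots> = upart i j * gcd v (c div w) * (n div lcm j c)"
    by (simp only: totient_divisor_sum)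
  finally show ?thesis unfolding v_def .
qed

lemma sum_Lmat_block_eq_sum_Rmat_block:
  assumes "i dvd j" and "j > 0" and "c > 0"
  shows "(\<Sum>d | d dvd c. Lmat n (i, j) (d, c)) = (\<Sum>e | e dvd c. Rmat n (i, j) (e, c))"
proof (cases "j dvd lcm i c")
  case False
  then show ?thesis by (simp add: Lmat_def Rmat_def Let_def)
next
  case True
  have "i \<noteq> 0" using assms(1,2) by auto
  then have "i > 0" by simp
  obtain k where j: "j = i * k" using assms(1) by (rule dvdE)
  have k: "j div i = k" using j \<open>i > 0\<close> by simp
  define u where "u = upart i j"
  define v where "v = vpart i j"
  have i: "i = u * v" using upart_mult_vpart[OF \<open>i > 0\<close>] unfolding u_def v_def by simp
  have "u > 0" using \<open>i > 0\<close> unfolding i by simp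
  have "coprime v k"
    using coprime_vpart[OF \<open>i > 0\<close>, of j] unfolding v_def k .
  have prime_dvd_u: "p dvd k" if "prime p" "p dvd u" for p
    using prime_dvd_upart_imp_dvd[OF \<open>i > 0\<close> that(1) that(2)[unfolded u_def]] unfolding k .
  have j_vw: "j = v * (u * k)" using i j by (simp add: mult.commute mult.left_commute)
  have "lcm i c dvd v * lcm u c"
    unfolding i by (intro lcm_least) (simp_all add: mult.commute)
  with True have "v * (u * k) dvd v * lcm u c"
    unfolding j_vw by (rule dvd_trans)
  then have "u * k dvd lcm u c"
    using \<open>i > 0\<close> i by simp
  then have "u * k dvd c"
    by (rule mult_dvd_of_dvd_lcm[OF \<open>u > 0\<close> _ prime_dvd_u])
  then obtain c' where c: "c = u * k * c'" by (rule dvdE)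
  have "(\<Sum>d | d dvd c. Lmat n (i, j) (d, c)) = gcd i c * (n div lcm j c)"
    using \<open>c > 0\<close> True by (rule sum_Lmat_block)
  also have "gcd i c = u * gcd v (c div (u * k))"
  proof -
    have "c div (u * k) = c'" using c \<open>c > 0\<close> by simp
    moreover have "gcd i c = u * gcd v (k * c')"
      unfolding i c by (simp only: gcd_mult_distrib_nat mult.assoc)
    moreover have "gcd v (k * c') = gcd v c'"
      using \<open>coprime v k\<close> by (rule gcd_mult_right_left_cancel)
    ultimately show ?thesis by simp
  qed
  also have "u * gcd v (c div (u * k)) * (n div lcm j c) = (\<Sum>e | e dvd c. Rmat n (i, j) (e, c))"
    using sum_Rmat_block[OF \<open>j > 0\<close> \<open>c > 0\<close> True _ \<open>u * k dvd c\<close>] j_vw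
    unfolding u_def v_def by simp
  finally show ?thesis .
qed

lemma sum_Pset:
  fixes f :: "nat \<times> nat \<Rightarrow> 'a::comm_monoid_add"
  assumes "n > 0"
  shows "(\<Sum>k\<in>Pset n. f k) = (\<Sum>c | c dvd n. \<Sum>d | d dvd c. f (d, c))"
proof -
  have "Pset n = prod.swap ` (SIGMA c:{c. c dvd n}. {d. d dvd c})"
    unfolding Pset_def by force
  moreover have "\<forall>c\<in>{c. c dvd n}. finite {d. d dvd c}"
    using assms by (auto intro: finite_divisors_nat dest: dvd_0_left)
  ultimately show ?thesis
    using assms by (simp add: sum.reindex sum.Sigma) (simp add: case_prod_unfold prod.swap_def)
qed

lemma matvec_blockwise_constant:
  assumes "n > 0" and "\<forall>(d, c) \<in> Pset n. x (d, c) = x (1, c)"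
  shows "matvec n M x r = (\<Sum>c | c dvd n. of_nat (\<Sum>d | d dvd c. M r (d, c)) * x (1, c))"
proof -
  have "matvec n M x r = (\<Sum>c | c dvd n. \<Sum>d | d dvd c. of_nat (M r (d, c)) * x (d, c))"
    unfolding matvec_def using assms(1) by (rule sum_Pset)
  also have "\<dots> = (\<Sum>c | c dvd n. \<Sum>d | d dvd c. of_nat (M r (d, c)) * x (1, c))"
  proof (intro sum.cong refl)
    fix c d assume "c \<in> {c. c dvd n}" and "d \<in> {d. d dvd c}"
    then have "x (d, c) = x (1, c)" using assms(2) unfolding Pset_def by blast
    then show "of_nat (M r (d, c)) * x (d, c) = of_nat (M r (d, c)) * x (1, c)" by simp
  qed
  also have "\<dots> = (\<Sum>c | c dvd n. of_nat (\<Sum>d | d dvd c. M r (d, c)) * x (1, c))"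
    by (simp only: of_nat_sum sum_distrib_right)
  finally show ?thesis .
qed

theorem proposition3p2:
  fixes n :: nat and x :: "nat \<times> nat \<Rightarrow> 'a::comm_ring_1"
  assumes "n > 0"
    and "\<forall>(d, c) \<in> Pset n. x (d, c) = x (1, c)"
  shows "\<forall>r \<in> Pset n. matvec n (Lmat n) x r = matvec n (Rmat n) x r"
proof
  fix r assume "r \<in> Pset n"
  then obtain i j where r: "r = (i, j)" and "i dvd j" and "j dvd n"
    unfolding Pset_def by auto
  have "j > 0" using \<open>j dvd n\<close> \<open>n > 0\<close> by (auto intro: gr0I)
  have "(\<Sum>d | d dvd c. Lmat n r (d, c)) = (\<Sum>d | d dvd c. Rmat n r (d, c))" if "c dvd n" for c
    using that \<open>n > 0\<close> unfolding r
    by (intro sum_Lmat_block_eq_sum_Rmat_block[OF \<open>i dvd j\<close> \<open>j > 0\<close>]) (auto intro: gr0I)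
  then show "matvec n (Lmat n) x r = matvec n (Rmat n) x r"
    unfolding matvec_blockwise_constant[OF assms] by (intro sum.cong) auto
qed

end
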